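(* Let $f$ be a complex-valued harmonic function in a bounded open set $R\subset\mathbb{C}$. Suppose that $P=\operatorname{int}(\overline{R})\setminus R$ is empty or consists of finitely many poles of $f$, and suppose that $f$ has a $C^1$ extension to some open set $R_1\supset\overline{R}\setminus P$. Then $f(S)\cup f(\partial R\setminus P)$ has empty interior.
   Context: Writing $f=u+iv$, $J_f=u_xv_y-u_yv_x$ and $S=\{z\in R: J_f(z)=0\}$. A point $\alpha$ is a pole of $f$ if $f$ is harmonic in $\{z:0<|z-\alpha|<r\}$ for some $r>0$ and $\lim_{z\to\alpha}|f(z)|=\infty$. $f(\partial R\setminus P)$ denotes the image under the extension. *)

theory Defs
  imports "HOL-Analysis.Analysis"
begin

definition dx :: "(complex \<Rightarrow> complex) \<Rightarrow> complex \<Rightarrow> complex" where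
  "dx f z = vector_derivative (\<lambda>t::real. f (z + of_real t)) (at 0)"

definition dy :: "(complex \<Rightarrow> complex) \<Rightarrow> complex \<Rightarrow> complex" where
  "dy f z = vector_derivative (\<lambda>t::real. f (z + \<i> * of_real t)) (at 0)"

definition C1_on :: "complex set \<Rightarrow> (complex \<Rightarrow> complex) \<Rightarrow> bool" where
  "C1_on U f \<longleftrightarrow> f differentiable_on U \<and> continuous_on U (dx f) \<and> continuous_on U (dy f)"

definition C2_on :: "complex set \<Rightarrow> (complex \<Rightarrow> complex) \<Rightarrow> bool" where
  "C2_on U f \<longleftrightarrow> C1_on U f \<and> C1_on U (dx f) \<and> C1_on U (dy f)"

definition harmonic_on :: "complex set \<Rightarrow> (complex \<Rightarrow> complex) \<Rightarrow> bool" where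
  "harmonic_on U f \<longleftrightarrow> open U \<and> C2_on U f \<and> (\<forall>z\<in>U. dx (dx f) z + dy (dy f) z = 0)"

definition jacobian :: "(complex \<Rightarrow> complex) \<Rightarrow> complex \<Rightarrow> real" where
  "jacobian f z = Re (dx f z) * Im (dy f z) - Re (dy f z) * Im (dx f z)"

definition harmonic_pole :: "(complex \<Rightarrow> complex) \<Rightarrow> complex \<Rightarrow> bool" where
  "harmonic_pole f \<alpha> \<longleftrightarrow>
     (\<exists>r>0. harmonic_on (ball \<alpha> r - {\<alpha>}) f) \<and> filterlim (\<lambda>z. norm (f z)) at_top (at \<alpha>)"

end

theory Submission
  imports Defs
begin

text \<open>On \<open>R\<close> the Jacobians of \<open>f\<close> and \<open>g\<close> agree, so the set in question lies in
\<open>g(critical points of g) \<union> g(\<partial>R \<inter> R1)\<close>. By Sard's theorem the first set is a negligible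
\<open>\<sigma>\<close>-compact set, hence meagre. Near a regular point \<open>g\<close> is injective (inverse function
theorem), and an injective continuous map on an open set sends sets with empty interior to sets
with empty interior; since \<open>\<partial>R\<close> is closed with empty interior, countably many closed balls
exhibit the second set as meagre too. The Baire category theorem finishes the proof.\<close>

definition meagre :: "'a::topological_space set \<Rightarrow> bool" where
  "meagre A \<longleftrightarrow> (\<exists>\<G>. countable \<G> \<and> (\<forall>T\<in>\<G>. closed T \<and> interior T = {}) \<and> A \<subseteq> \<Union>\<G>)"

lemma meagreI:
  assumes "countable \<G>" "\<And>T. T \<in> \<G> \<Longrightarrow> closed T" "\<And>T. T \<in> \<G> \<Longrightarrow> interior T = {}" "A \<subseteq> \<Union>\<G>"
  shows "meagre A"
  using assms unfolding meagre_def by auto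

lemma meagreE:
  assumes "meagre A"
  obtains \<G> where "countable \<G>" "\<And>T. T \<in> \<G> \<Longrightarrow> closed T" "\<And>T. T \<in> \<G> \<Longrightarrow> interior T = {}"
    "A \<subseteq> \<Union>\<G>"
  using assms that unfolding meagre_def by metis

lemma meagre_subset: "meagre B \<Longrightarrow> A \<subseteq> B \<Longrightarrow> meagre A"
  by (elim meagreE, rule meagreI) auto

lemma meagre_Un: "meagre A \<Longrightarrow> meagre B \<Longrightarrow> meagre (A \<union> B)"
proof (elim meagreE)
  fix \<G> \<H>
  assume "countable \<G>" "\<And>T. T \<in> \<G> \<Longrightarrow> closed T" "\<And>T. T \<in> \<G> \<Longrightarrow> interior T = {}" "A \<subseteq> \<Union>\<G>"
    "countable \<H>" "\<And>T. T \<in> \<H> \<Longrightarrow> closed T" "\<And>T. T \<in> \<H> \<Longrightarrow> interior T = {}" "B \<subseteq> \<Union>\<H>"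
  then show "meagre (A \<union> B)"
    by (intro meagreI[of "\<G> \<union> \<H>"]) auto
qed

lemma interior_meagre:
  fixes A :: "'a::complete_space set"
  assumes "meagre A"
  shows "interior A = {}"
proof -
  obtain \<G> where \<G>: "countable \<G>" "\<And>T. T \<in> \<G> \<Longrightarrow> closed T" "\<And>T. T \<in> \<G> \<Longrightarrow> interior T = {}"
    "A \<subseteq> \<Union>\<G>"
    using meagreE[OF assms] by blast
  have "euclidean interior_of \<Union>\<G> = {}"
    using \<G>(1-3) completely_metrizable_space_euclidean
    by (intro Baire_category_alt) (auto simp: closed_closedin[symmetric])
  then show ?thesis
    using interior_mono[OF \<G>(4)] by simp
qed

lemma meagre_negligible_sigma_compact:
  fixes K :: "nat \<Rightarrow> 'a::euclidean_space set"
  assumes "\<And>n. compact (K n)" "negligible (\<Union>n. K n)"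
  shows "meagre (\<Union>n. K n)"
proof (rule meagreI)
  fix T assume "T \<in> range K"
  then show "closed T"
    using assms(1) compact_imp_closed by blast
  have "negligible (interior T)"
    using negligible_subset[OF assms(2)] interior_subset \<open>T \<in> range K\<close> by blast
  then show "interior T = {}"
    using open_not_negligible by blast
qed auto

lemma interior_image_inj_on_empty:
  fixes g :: "'a::topological_space \<Rightarrow> 'b::topological_space"
  assumes "open U" "continuous_on U g" "inj_on g U" "A \<subseteq> U" "interior A = {}"
  shows "interior (g ` A) = {}"
proof (rule ccontr)
  assume "interior (g ` A) \<noteq> {}"
  then obtain x where "x \<in> A" "g x \<in> interior (g ` A)"
    using interior_subset by blast
  define V where "V = U \<inter> g -` interior (g ` A)"
  have "open V"
    unfolding V_def using assms(1,2) by (intro continuous_open_preimage) auto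
  moreover have "V \<subseteq> A"
  proof
    fix y assume "y \<in> V"
    then obtain y' where "y' \<in> A" "g y = g y'"
      using interior_subset unfolding V_def by blast
    with \<open>y \<in> V\<close> show "y \<in> A"
      using inj_onD[OF assms(3)] assms(4) unfolding V_def by auto
  qed
  moreover have "x \<in> V"
    using \<open>x \<in> A\<close> \<open>g x \<in> interior (g ` A)\<close> assms(4) unfolding V_def by auto
  ultimately show False
    using assms(5) interior_maximal by blast
qed

lemma interior_frontier_open:
  assumes "open S"
  shows "interior (frontier S) = {}"
proof -
  have "interior (frontier S) \<subseteq> closure S" "interior (frontier S) \<inter> S = {}"
    using interior_subset[of "frontier S"] assms by (auto simp: frontier_def interior_open)
  then show ?thesis
    using open_Int_closure_eq_empty[of "interior (frontier S)" S] by auto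
qed

lemma has_vector_derivative_along_line:
  assumes "(g has_derivative D) (at z)"
  shows "((\<lambda>t::real. g (z + of_real t * d)) has_vector_derivative D d) (at 0)"
proof -
  have "((\<lambda>t::real. z + of_real t * d) has_derivative (\<lambda>t. of_real t * d)) (at 0)"
    by (auto intro!: derivative_eq_intros linear_imp_has_derivative linearI
        simp: algebra_simps scaleR_conv_of_real)
  from has_derivative_compose[OF this, of g D] assms
  have "((\<lambda>t::real. g (z + of_real t * d)) has_derivative (\<lambda>t. D (of_real t * d))) (at 0)"
    by simp
  moreover have "D (of_real t * d) = t *\<^sub>R D d" for t
    using linear_scale[OF has_derivative_linear[OF assms], of t d]
    by (simp add: scaleR_conv_of_real)
  ultimately show ?thesis
    unfolding has_vector_derivative_def by simp
qed

lemma dx_dy_eq_has_derivative: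
  assumes "(g has_derivative D) (at z)"
  shows "dx g z = D 1" "dy g z = D \<i>"
  using has_vector_derivative_along_line[OF assms, THEN vector_derivative_at, of 1]
    has_vector_derivative_along_line[OF assms, THEN vector_derivative_at, of \<i>]
  by (simp_all add: dx_def dy_def mult.commute)

lemma dx_dy_cong_open:
  assumes "open S" "z \<in> S" "\<And>w. w \<in> S \<Longrightarrow> f w = g w"
  shows "dx f z = dx g z" "dy f z = dy g z"
proof -
  have "vector_derivative (\<lambda>t::real. f (z + of_real t * d)) (at 0)
      = vector_derivative (\<lambda>t. g (z + of_real t * d)) (at 0)" for d
  proof -
    have "open ((\<lambda>t::real. z + of_real t * d) -` S)"
      by (intro open_vimage assms(1) continuous_intros)
    then have "\<forall>\<^sub>F t in nhds 0. z + of_real t * d \<in> S"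
      using eventually_nhds_in_open[of _ 0] assms(2) by fastforce
    then show ?thesis
      using assms(3) by (intro vector_derivative_cong_eq[where A=UNIV, simplified]) (auto elim: eventually_mono)
  qed
  from this[of 1] this[of \<i>] show "dx f z = dx g z" "dy f z = dy g z"
    by (simp_all add: dx_def dy_def mult.commute)
qed

lemma linear_complex_eq:
  assumes "linear (D :: complex \<Rightarrow> complex)"
  shows "D v = of_real (Re v) * D 1 + of_real (Im v) * D \<i>"
proof -
  have "v = Re v *\<^sub>R 1 + Im v *\<^sub>R \<i>"
    by (simp add: complex_eq_iff)
  then have "D v = D (Re v *\<^sub>R 1 + Im v *\<^sub>R \<i>)"
    by (rule arg_cong)
  also have "\<dots> = Re v *\<^sub>R D 1 + Im v *\<^sub>R D \<i>"
    using assms by (simp add: linear_add linear_scale)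
  finally show ?thesis
    by (simp add: scaleR_conv_of_real)
qed

definition total_deriv :: "(complex \<Rightarrow> complex) \<Rightarrow> complex \<Rightarrow> complex \<Rightarrow> complex" where
  "total_deriv g z v = of_real (Re v) * dx g z + of_real (Im v) * dy g z"

lemma linear_total_deriv: "linear (total_deriv g z)"
  by (rule linearI) (simp_all add: total_deriv_def algebra_simps scaleR_conv_of_real)

lemma has_derivative_eq_total_deriv:
  assumes "(g has_derivative D) (at z)"
  shows "D = total_deriv g z"
proof
  fix v
  have "D v = of_real (Re v) * D 1 + of_real (Im v) * D \<i>"
    by (rule linear_complex_eq[OF has_derivative_linear[OF assms]])
  then show "D v = total_deriv g z v"
    by (simp add: total_deriv_def dx_dy_eq_has_derivative[OF assms])
qed

lemma C1_on_has_derivative: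
  assumes "open S" "C1_on S g" "z \<in> S"
  shows "(g has_derivative total_deriv g z) (at z)"
proof -
  have "g differentiable (at z)"
    using assms differentiable_on_eq_differentiable_at unfolding C1_on_def by blast
  then obtain D where "(g has_derivative D) (at z)"
    unfolding differentiable_def by blast
  with has_derivative_eq_total_deriv show ?thesis
    by metis
qed

lemma continuous_on_jacobian:
  assumes "C1_on S g"
  shows "continuous_on S (jacobian g)"
  using assms unfolding C1_on_def jacobian_def[abs_def] by (intro continuous_intros) auto

lemma total_deriv_eq_0_iff:
  "total_deriv g z v = 0 \<longleftrightarrow>
    Re v * Re (dx g z) + Im v * Re (dy g z) = 0 \<and> Re v * Im (dx g z) + Im v * Im (dy g z) = 0"
  by (simp add: total_deriv_def complex_eq_iff)

lemma total_deriv_singular: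
  assumes "jacobian g z = 0"
  obtains v where "v \<noteq> 0" "total_deriv g z v = 0"
proof -
  define a b where "a = dx g z" and "b = dy g z"
  have J: "Re a * Im b = Re b * Im a"
    using assms by (simp add: jacobian_def a_def b_def)
  consider "Re a \<noteq> 0 \<or> Re b \<noteq> 0" | "Im a \<noteq> 0 \<or> Im b \<noteq> 0" | "a = 0" "b = 0"
    by (metis complex_eq_iff zero_complex.sel)
  then show ?thesis
  proof cases
    case 1
    then show ?thesis
      using J by (intro that[of "Complex (Re b) (- Re a)"])
        (auto simp: total_deriv_eq_0_iff Complex_eq_0 a_def[symmetric] b_def[symmetric] algebra_simps)
  next
    case 2
    then show ?thesis
      using J by (intro that[of "Complex (Im b) (- Im a)"])
        (auto simp: total_deriv_eq_0_iff Complex_eq_0 a_def[symmetric] b_def[symmetric] algebra_simps)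
  next
    case 3
    then show ?thesis
      by (intro that[of 1]) (simp_all add: total_deriv_def a_def b_def)
  qed
qed

lemma inj_total_deriv_iff: "inj (total_deriv g z) \<longleftrightarrow> jacobian g z \<noteq> 0"
proof
  show "jacobian g z \<noteq> 0" if "inj (total_deriv g z)"
    using that total_deriv_singular linear_injective_0[OF linear_total_deriv] by metis
next
  assume J: "jacobian g z \<noteq> 0"
  have "v = 0" if "total_deriv g z v = 0" for v
  proof -
    define a b where "a = dx g z" and "b = dy g z"
    have e: "Re v * Re a + Im v * Re b = 0" "Re v * Im a + Im v * Im b = 0"
      using that by (simp_all add: total_deriv_eq_0_iff a_def b_def)
    have "Re v * jacobian g z = Im b * (Re v * Re a + Im v * Re b) - Re b * (Re v * Im a + Im v * Im b)"
         "Im v * jacobian g z = Re a * (Re v * Im a + Im v * Im b) - Im a * (Re v * Re a + Im v * Re b)"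
      by (simp_all add: jacobian_def a_def b_def algebra_simps)
    then have "Re v * jacobian g z = 0" "Im v * jacobian g z = 0"
      by (simp_all add: e)
    then show "v = 0"
      using J by (simp add: complex_eq_iff)
  qed
  then show "inj (total_deriv g z)"
    using linear_injective_0[OF linear_total_deriv] by blast
qed

lemma onorm_total_deriv_diff_le:
  "onorm (\<lambda>v. total_deriv g x v - total_deriv g a v) \<le> norm (dx g x - dx g a) + norm (dy g x - dy g a)"
proof (rule onorm_le)
  fix v
  have "total_deriv g x v - total_deriv g a v
      = of_real (Re v) * (dx g x - dx g a) + of_real (Im v) * (dy g x - dy g a)"
    by (simp add: total_deriv_def algebra_simps)
  also have "norm \<dots> \<le> \<bar>Re v\<bar> * norm (dx g x - dx g a) + \<bar>Im v\<bar> * norm (dy g x - dy g a)"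
    by (rule order_trans[OF norm_triangle_ineq]) (simp add: norm_mult)
  also have "\<dots> \<le> norm v * norm (dx g x - dx g a) + norm v * norm (dy g x - dy g a)"
    by (intro add_mono mult_right_mono abs_Re_le_cmod abs_Im_le_cmod) auto
  finally show "norm (total_deriv g x v - total_deriv g a v)
      \<le> (norm (dx g x - dx g a) + norm (dy g x - dy g a)) * norm v"
    by (simp add: algebra_simps)
qed

lemma total_deriv_continuous:
  assumes "open S" "C1_on S g" "a \<in> S" "e > 0"
  shows "\<exists>d>0. \<forall>x. dist a x < d \<longrightarrow> onorm (\<lambda>v. total_deriv g x v - total_deriv g a v) < e"
proof -
  have "isCont (dx g) a" "isCont (dy g) a"
    using assms(1-3) continuous_on_eq_continuous_at unfolding C1_on_def by blast+
  then have "((\<lambda>x. dx g x - dx g a) \<longlongrightarrow> 0) (at a)" "((\<lambda>x. dy g x - dy g a) \<longlongrightarrow> 0) (at a)"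
    unfolding isCont_def by (simp_all add: LIM_zero)
  then have "((\<lambda>x. norm (dx g x - dx g a) + norm (dy g x - dy g a)) \<longlongrightarrow> 0) (at a)"
    by (intro tendsto_add_zero tendsto_norm_zero)
  from order_tendstoD(2)[OF this \<open>e > 0\<close>]
  obtain d where "d > 0" and d: "\<And>x. x \<noteq> a \<Longrightarrow> dist x a < d
      \<Longrightarrow> norm (dx g x - dx g a) + norm (dy g x - dy g a) < e"
    unfolding eventually_at by auto
  have "onorm (\<lambda>v. total_deriv g x v - total_deriv g a v) < e" if "dist a x < d" for x
  proof (rule le_less_trans[OF onorm_total_deriv_diff_le])
    show "norm (dx g x - dx g a) + norm (dy g x - dy g a) < e"
      using d[of x] that \<open>e > 0\<close> by (cases "x = a") (auto simp: dist_commute)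
  qed
  with \<open>d > 0\<close> show ?thesis
    by blast
qed

lemma C1_on_locally_injective:
  assumes "open S" "C1_on S g" "a \<in> S" "jacobian g a \<noteq> 0"
  obtains r where "r > 0" "ball a r \<subseteq> S" "inj_on g (ball a r)"
proof -
  have "inj (total_deriv g a)"
    using assms(4) inj_total_deriv_iff by blast
  then obtain h where h: "linear h" "h \<circ> total_deriv g a = id"
    using linear_injective_left_inverse[OF linear_total_deriv] by blast
  show ?thesis
    using has_derivative_locally_injective[OF assms(3,1) linear_conv_bounded_linear[THEN iffD1, OF h(1)]
        h(2) C1_on_has_derivative[OF assms(1,2)] total_deriv_continuous[OF assms(1-3)]] that
    by blast
qed

lemma negligible_image_noninjective_derivative:
  fixes g :: "complex \<Rightarrow> complex"
  assumes der: "\<And>x. x \<in> S \<Longrightarrow> (g has_derivative g' x) (at x within S)"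
    and noninj: "\<And>x. x \<in> S \<Longrightarrow> \<not> inj (g' x)"
  shows "negligible (g ` S)"
proof -
  \<comment> \<open>\<open>baby_Sard\<close> is stated for \<open>real^'n\<close>, so transport \<open>g\<close> along a linear isomorphism.\<close>
  obtain \<phi> :: "complex \<Rightarrow> real^2" and \<psi> where
    iso: "linear \<phi>" "linear \<psi>" "\<And>x. \<psi> (\<phi> x) = x" "\<And>y. \<phi> (\<psi> y) = y"
    by (rule isomorphisms_UNIV_UNIV[where 'M=complex and 'N="real^2"]) auto
  define L where "L y = \<phi> \<circ> g' (\<psi> y) \<circ> \<psi>" for y
  have "negligible ((\<phi> \<circ> g \<circ> \<psi>) ` (\<phi> ` S))"
  proof (rule baby_Sard)
    fix y assume "y \<in> \<phi> ` S"
    then have "\<psi> y \<in> S"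
      using iso(3) by auto
    have "((\<lambda>y. g (\<psi> y)) has_derivative (\<lambda>v. g' (\<psi> y) (\<psi> v))) (at y within \<phi> ` S)"
      using iso(3) \<open>y \<in> \<phi> ` S\<close> by (intro has_derivative_in_compose2[OF der] linear_imp_has_derivative iso(2)) auto
    then show der_L: "(\<phi> \<circ> g \<circ> \<psi> has_derivative L y) (at y within \<phi> ` S)"
      unfolding L_def o_def by (rule has_derivative_compose[OF _ linear_imp_has_derivative[OF iso(1)]])
    have "\<not> inj (L y)"
      using noninj[OF \<open>\<psi> y \<in> S\<close>] iso unfolding L_def inj_def by (metis comp_apply)
    then show "rank (matrix (L y)) < CARD(2)"
      using less_rank_noninjective matrix_vector_mul(2)[OF has_derivative_linear[OF der_L]] by metis
  qed simp
  moreover have "(\<phi> \<circ> g \<circ> \<psi>) ` (\<phi> ` S) = \<phi> ` (g ` S)"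
    by (auto simp: image_comp iso(3))
  ultimately have "negligible (\<psi> ` \<phi> ` g ` S)"
    using negligible_differentiable_image_negligible[OF _ _ linear_imp_differentiable_on[OF iso(2)]]
    by simp
  then show ?thesis
    by (simp add: image_comp iso(3))
qed

lemma negligible_critical_image:
  assumes "open S" "C1_on S g"
  shows "negligible (g ` {z \<in> S. jacobian g z = 0})"
proof (rule negligible_image_noninjective_derivative)
  fix x assume x: "x \<in> {z \<in> S. jacobian g z = 0}"
  then show "(g has_derivative total_deriv g x) (at x within {z \<in> S. jacobian g z = 0})"
    using C1_on_has_derivative[OF assms] has_derivative_at_withinI by blast
  show "\<not> inj (total_deriv g x)"
    using x inj_total_deriv_iff by blast
qed

lemma meagre_critical_image:
  assumes "open U" "C1_on U g"
  shows "meagre (g ` {z \<in> U. jacobian g z = 0})"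
proof -
  obtain C :: "nat \<Rightarrow> complex set" where C: "\<And>n. compact (C n)" "\<And>n. C n \<subseteq> U" "\<Union>(range C) = U"
    using open_Union_compact_subsets[OF assms(1)] by metis
  have contg: "continuous_on U g"
    using assms(2) differentiable_imp_continuous_on unfolding C1_on_def by blast
  have compact_parts: "compact (g ` {z \<in> C n. jacobian g z = 0})" for n
  proof -
    have "closed {z \<in> C n. jacobian g z = 0}"
      using continuous_on_subset[OF continuous_on_jacobian[OF assms(2)] C(2)] compact_imp_closed[OF C(1)]
      by (intro continuous_closed_preimage_constant)
    moreover have "bounded {z \<in> C n. jacobian g z = 0}"
      by (rule bounded_subset[OF compact_imp_bounded[OF C(1)]]) auto
    ultimately have "compact {z \<in> C n. jacobian g z = 0}"
      by (simp add: compact_eq_bounded_closed)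
    moreover have "{z \<in> C n. jacobian g z = 0} \<subseteq> U"
      using C(2) by auto
    ultimately show ?thesis
      by (intro compact_continuous_image continuous_on_subset[OF contg])
  qed
  have "{z \<in> U. jacobian g z = 0} = (\<Union>n. {z \<in> C n. jacobian g z = 0})"
    using C(2,3) by auto
  then have parts: "g ` {z \<in> U. jacobian g z = 0} = (\<Union>n. g ` {z \<in> C n. jacobian g z = 0})"
    by (simp add: image_UN)
  show ?thesis
    unfolding parts
  proof (rule meagre_negligible_sigma_compact[OF compact_parts])
    show "negligible (\<Union>n. g ` {z \<in> C n. jacobian g z = 0})"
      using negligible_critical_image[OF assms] unfolding parts .
  qed
qed

lemma meagre_image_regular_points:
  assumes "open U" "C1_on U g" "closed F" "interior F = {}"
  shows "meagre (g ` (F \<inter> {z \<in> U. jacobian g z \<noteq> 0}))"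
proof -
  have contg: "continuous_on U g"
    using assms(2) differentiable_imp_continuous_on unfolding C1_on_def by blast
  define \<B> where "\<B> = {ball c r | c r. r > 0 \<and> ball c (2 * r) \<subseteq> U \<and> inj_on g (ball c (2 * r))}"
  obtain \<B>' where \<B>': "\<B>' \<subseteq> \<B>" "countable \<B>'" "\<Union>\<B>' = \<Union>\<B>"
    using Lindelof[of \<B>] unfolding \<B>_def by blast
  show ?thesis
  proof (rule meagreI[of "(\<lambda>B. g ` (F \<inter> closure B)) ` \<B>'"])
    fix T assume "T \<in> (\<lambda>B. g ` (F \<inter> closure B)) ` \<B>'"
    then obtain c r where r: "r > 0" "ball c (2 * r) \<subseteq> U" "inj_on g (ball c (2 * r))"
      and T: "T = g ` (F \<inter> cball c r)"
      using \<B>'(1) unfolding \<B>_def by auto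
    have sub: "F \<inter> cball c r \<subseteq> ball c (2 * r)"
      using r(1) by auto
    have "compact T"
      unfolding T using sub r(2) assms(3)
      by (intro compact_continuous_image continuous_on_subset[OF contg] closed_Int_compact) auto
    then show "closed T"
      by (rule compact_imp_closed)
    have "interior (F \<inter> cball c r) = {}"
      using assms(4) interior_mono by blast
    then show "interior T = {}"
      unfolding T using sub continuous_on_subset[OF contg r(2)] r(3)
      by (intro interior_image_inj_on_empty[of "ball c (2 * r)"]) auto
  next
    show "g ` (F \<inter> {z \<in> U. jacobian g z \<noteq> 0}) \<subseteq> \<Union>((\<lambda>B. g ` (F \<inter> closure B)) ` \<B>')"
    proof clarify
      fix x assume x: "x \<in> F" "x \<in> U" "jacobian g x \<noteq> 0"
      then obtain r where "r > 0" "ball x r \<subseteq> U" "inj_on g (ball x r)"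
        using C1_on_locally_injective[OF assms(1,2)] by metis
      then have "ball x (r / 2) \<in> \<B>"
        unfolding \<B>_def by force
      then obtain B where "B \<in> \<B>'" "x \<in> B"
        using \<B>'(3) \<open>r > 0\<close> by (metis Union_iff centre_in_ball half_gt_zero)
      then show "g x \<in> \<Union>((\<lambda>B. g ` (F \<inter> closure B)) ` \<B>')"
        using x(1) closure_subset by blast
    qed
  qed (use \<B>'(2) in auto)
qed

lemma meagre_critical_image_Un_image:
  assumes "open U" "C1_on U g" "closed F" "interior F = {}"
  shows "meagre (g ` {z \<in> U. jacobian g z = 0} \<union> g ` (F \<inter> U))"
proof (rule meagre_subset)
  show "meagre (g ` {z \<in> U. jacobian g z = 0} \<union> g ` (F \<inter> {z \<in> U. jacobian g z \<noteq> 0}))"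
    using meagre_critical_image[OF assms(1,2)] meagre_image_regular_points[OF assms] by (rule meagre_Un)
qed auto

theorem lemma4p15:
  fixes f g :: "complex \<Rightarrow> complex" and R R1 :: "complex set"
  assumes "open R" and "bounded R"
    and "harmonic_on R f"
    and "finite (interior (closure R) - R)"
    and "\<forall>\<alpha>\<in>interior (closure R) - R. harmonic_pole f \<alpha>"
    and "open R1" and "closure R - (interior (closure R) - R) \<subseteq> R1"
    and "C1_on R1 g" and "\<forall>z\<in>R. g z = f z"
  shows "interior (f ` {z\<in>R. jacobian f z = 0} \<union> g ` (frontier R - (interior (closure R) - R))) = {}"
proof -
  let ?P = "interior (closure R) - R"
  have "R \<subseteq> R1" "frontier R - ?P \<subseteq> R1"
    using assms(7) closure_subset by (auto simp: frontier_def)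
  have f_eq_g: "f z = g z" if "z \<in> R" for z
    using assms(9) that by simp
  have jacobian_eq: "jacobian f z = jacobian g z" if "z \<in> R" for z
    using dx_dy_cong_open[OF assms(1) that f_eq_g] unfolding jacobian_def by simp
  have "f ` {z\<in>R. jacobian f z = 0} \<subseteq> g ` {z \<in> R1. jacobian g z = 0}"
  proof
    fix w assume "w \<in> f ` {z\<in>R. jacobian f z = 0}"
    then obtain z where "z \<in> R" "jacobian f z = 0" "w = f z"
      by blast
    then show "w \<in> g ` {z \<in> R1. jacobian g z = 0}"
      using jacobian_eq f_eq_g \<open>R \<subseteq> R1\<close> by (intro image_eqI[of _ _ z]) auto
  qed
  moreover have "g ` (frontier R - ?P) \<subseteq> g ` (frontier R \<inter> R1)"
    using \<open>frontier R - ?P \<subseteq> R1\<close> by (intro image_mono) auto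
  ultimately have "f ` {z\<in>R. jacobian f z = 0} \<union> g ` (frontier R - ?P)
      \<subseteq> g ` {z \<in> R1. jacobian g z = 0} \<union> g ` (frontier R \<inter> R1)"
    by (rule Un_mono)
  with meagre_critical_image_Un_image[OF assms(6,8) frontier_closed interior_frontier_open[OF assms(1)]]
  have "meagre (f ` {z\<in>R. jacobian f z = 0} \<union> g ` (frontier R - ?P))"
    by (rule meagre_subset)
  then show ?thesis
    by (rule interior_meagre)
qed

end
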